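(* Assume $\kappa=(\kappa_1,\dots,\kappa_n)\in\Gamma_k$ with $\kappa_1\ge\kappa_2\ge\dots\ge\kappa_n$. Then for any $0\le s\le k\le n$, $$\frac{\kappa_1^s\,\sigma_{k-s}(\kappa)}{\sigma_k(\kappa)}\ge\frac{C_n^{k-s}}{C_n^k},$$ where $C_n^m=\frac{n!}{m!(n-m)!}$.
   Context: $\sigma_m(\kappa)$ denotes the $m$-th elementary symmetric function of $\kappa\in\mathbb{R}^n$, with $\sigma_0=1$. $\Gamma_k=\{\kappa\in\mathbb{R}^n:\sigma_m(\kappa)>0,\ m=1,\dots,k\}$ (Gårding cone), $k\ge1$. *)

theory Defs
  imports Complex_Main
begin

text \<open>Vectors in R^n are represented as functions nat => real, with components
  kappa 0, ..., kappa (n-1) (i.e. kappa_i of the paper is kappa (i-1)).\<close>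

definition esym :: "nat \<Rightarrow> nat \<Rightarrow> (nat \<Rightarrow> real) \<Rightarrow> real" where
  "esym n m \<kappa> = (\<Sum>S\<in>{S. S \<subseteq> {..<n} \<and> card S = m}. \<Prod>i\<in>S. \<kappa> i)"

definition garding_cone :: "nat \<Rightarrow> nat \<Rightarrow> (nat \<Rightarrow> real) set" where
  "garding_cone n k = {\<kappa>. \<forall>m\<in>{1..k}. esym n m \<kappa> > 0}"

end

theory Submission
  imports Defs "HOL-Computational_Algebra.Fundamental_Theorem_Algebra"
begin

text \<open>With \<open>E\<^sub>j = \<sigma>\<^sub>j / C\<^sub>n\<^sup>j\<close>, Newton's inequalities \<open>E\<^sub>j\<^sub>-\<^sub>1 E\<^sub>j\<^sub>+\<^sub>1 \<le> E\<^sub>j\<^sup>2\<close> make the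
  ratios \<open>E\<^sub>j\<^sub>+\<^sub>1 / E\<^sub>j\<close> non-increasing as long as the \<open>E\<^sub>j\<close> are positive, which on
  \<open>\<Gamma>\<^sub>k\<close> is the case for \<open>j \<le> k\<close>. So each ratio up to \<open>E\<^sub>k\<close> is at most
  \<open>E\<^sub>1 / E\<^sub>0 = (\<kappa>\<^sub>1 + \<dots> + \<kappa>\<^sub>n) / n \<le> \<kappa>\<^sub>1\<close>, and \<open>E\<^sub>k \<le> \<kappa>\<^sub>1\<^sup>s E\<^sub>k\<^sub>-\<^sub>s\<close> follows.

  Newton's inequalities hold for every real \<open>\<kappa>\<close>: the polynomial
  \<open>\<Prod>(x + \<kappa>\<^sub>i) = \<Sum> C\<^sub>n\<^sup>i E\<^sub>n\<^sub>-\<^sub>i x\<^sup>i\<close> has only real roots, real-rootedness survives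
  differentiation (the logarithmic derivative \<open>p'/p = \<Sum> 1/(z - r\<^sub>i)\<close> has non-zero imaginary
  part off the real axis) and reversal of the coefficients, and these operations cut the
  polynomial down to a real-rooted quadratic whose discriminant is the Newton inequality.\<close>

lemma esym_Pow: "esym n m \<kappa> = (\<Sum>S\<in>Pow {..<n}. if card S = m then \<Prod>i\<in>S. \<kappa> i else 0)"
proof -
  have "{S. S \<subseteq> {..<n} \<and> card S = m} = {S \<in> Pow {..<n}. card S = m}" by auto
  then show ?thesis
    unfolding esym_def by (simp only: sum.inter_filter finite_Pow_iff finite_lessThan)
qed

lemma esym_0 [simp]: "esym n 0 \<kappa> = 1"
proof -
  have "{S. S \<subseteq> {..<n} \<and> card S = 0} = {{}}"
    by (auto dest: finite_subset)
  then show ?thesis by (simp add: esym_def)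
qed

lemma esym_eq_0: "n < m \<Longrightarrow> esym n m \<kappa> = 0"
  unfolding esym_Pow by (intro sum.neutral) (auto dest: card_mono[rotated])

lemma esym_Suc: "esym (Suc n) (Suc m) \<kappa> = esym n (Suc m) \<kappa> + \<kappa> n * esym n m \<kappa>"
proof -
  let ?f = "\<lambda>m S. if card S = m then \<Prod>i\<in>S. \<kappa> i else 0"
  have "inj_on (insert n) (Pow {..<n})"
    by (auto simp: inj_on_def)
  moreover have "?f (Suc m) (insert n S) = \<kappa> n * ?f m S" if "S \<in> Pow {..<n}" for S
  proof -
    have "finite S" "n \<notin> S"
      using that finite_subset[of S "{..<n}"] by auto
    then show ?thesis by simp
  qed
  ultimately have "(\<Sum>S\<in>insert n ` Pow {..<n}. ?f (Suc m) S) = \<kappa> n * esym n m \<kappa>"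
    by (simp add: sum.reindex esym_Pow sum_distrib_left)
  moreover have "Pow {..<n} \<inter> insert n ` Pow {..<n} = {}"
    by auto
  ultimately show ?thesis
    by (simp add: esym_Pow lessThan_Suc Pow_insert sum.union_disjoint)
qed

lemma esym_1: "esym n 1 \<kappa> = (\<Sum>i<n. \<kappa> i)"
  by (induction n) (simp_all add: esym_eq_0 esym_Suc[of _ 0, simplified])

lemma coeff_prod_linear_factors:
  "coeff (\<Prod>i<n. [:complex_of_real (\<kappa> i), 1:]) m
     = (if m \<le> n then complex_of_real (esym n (n - m) \<kappa>) else 0)"
proof (induction n arbitrary: m)
  case 0
  then show ?case by simp
next
  case (Suc n)
  note IH = Suc.IH
  have "coeff (\<Prod>i<Suc n. [:complex_of_real (\<kappa> i), 1:]) m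
      = \<kappa> n * coeff (\<Prod>i<n. [:complex_of_real (\<kappa> i), 1:]) m
        + (if m = 0 then 0 else coeff (\<Prod>i<n. [:complex_of_real (\<kappa> i), 1:]) (m - 1))"
    by (cases m) (simp_all add: algebra_simps)
  also have "\<dots> = (if m \<le> Suc n then complex_of_real (esym (Suc n) (Suc n - m) \<kappa>) else 0)"
  proof (cases m)
    case 0
    then show ?thesis by (simp add: IH esym_Suc esym_eq_0)
  next
    case (Suc j)
    show ?thesis
    proof (cases "j < n")
      case True
      then have "n - j = Suc (n - Suc j)" by simp
      then show ?thesis using True \<open>m = Suc j\<close> by (simp add: IH esym_Suc)
    next
      case False
      then show ?thesis using \<open>m = Suc j\<close> by (auto simp: IH not_less le_Suc_eq)
    qed
  qed
  finally show ?case .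
qed


text \<open>The zero polynomial counts as real-rooted, so that the class is closed under differentiation.\<close>

definition real_rooted :: "complex poly \<Rightarrow> bool" where
  "real_rooted p \<longleftrightarrow> p = 0 \<or> (\<forall>z. poly p z = 0 \<longrightarrow> Im z = 0)"

lemma real_rooted_Im_logderiv:
  assumes "p \<noteq> 0" "real_rooted p" "degree p > 0" "Im z \<noteq> 0"
  shows "Im z * Im (poly (pderiv p) z / poly p z) < 0"
  using assms
proof (induction "degree p" arbitrary: p rule: less_induct)
  case less
  then have roots: "poly p w = 0 \<Longrightarrow> Im w = 0" for w
    by (auto simp: real_rooted_def)
  obtain r where "poly p r = 0"
    using fundamental_theorem_of_algebra less.prems(3) by (metis constant_degree not_less0)
  then obtain q where pq: "p = [:-r, 1:] * q" and "Im r = 0"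
    using roots by (metis dvdE poly_eq_0_iff_dvd)
  have "q \<noteq> 0" using pq less.prems(1) by auto
  then have deg: "degree q < degree p"
    using degree_mult_eq[of "[:-r, 1:]" q] by (simp add: pq)
  have "real_rooted q"
    using roots by (auto simp: real_rooted_def pq)
  have "poly q z \<noteq> 0" "z - r \<noteq> 0"
    using roots[of z] less.prems(4) \<open>Im r = 0\<close> by (auto simp: pq)
  have dp: "poly (pderiv p) z = poly q z + (z - r) * poly (pderiv q) z"
    unfolding pq pderiv_mult by (simp add: pderiv_pCons algebra_simps)
  have pz: "poly p z = (z - r) * poly q z"
    by (simp add: pq algebra_simps)
  from \<open>poly q z \<noteq> 0\<close> \<open>z - r \<noteq> 0\<close> have logderiv:
    "poly (pderiv p) z / poly p z = inverse (z - r) + poly (pderiv q) z / poly q z"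
    unfolding dp pz by (simp add: field_simps)
  have "Im z * Im (inverse (z - r)) < 0"
    using less.prems(4) \<open>Im r = 0\<close> \<open>z - r \<noteq> 0\<close>
    by (simp add: add_nonneg_pos flip: power2_eq_square)
  moreover have "Im z * Im (poly (pderiv q) z / poly q z) \<le> 0"
  proof (cases "degree q = 0")
    case True
    then have "pderiv q = 0" by (simp add: pderiv_eq_0_iff)
    then show ?thesis by simp
  next
    case False
    then show ?thesis
      using less.hyps[OF deg \<open>q \<noteq> 0\<close> \<open>real_rooted q\<close>] less.prems(4) by simp
  qed
  ultimately show ?case
    by (simp add: logderiv distrib_left)
qed

lemma real_rooted_pderiv:
  assumes "real_rooted p"
  shows "real_rooted (pderiv p)"
proof (cases "degree p = 0")
  case True
  then show ?thesis by (simp add: pderiv_eq_0_iff real_rooted_def)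
next
  case False
  then have "p \<noteq> 0" by auto
  have "Im z = 0" if "poly (pderiv p) z = 0" for z
  proof (rule ccontr)
    assume "Im z \<noteq> 0"
    then show False
      using real_rooted_Im_logderiv[OF \<open>p \<noteq> 0\<close> assms _ \<open>Im z \<noteq> 0\<close>] False that by simp
  qed
  then show ?thesis by (simp add: real_rooted_def)
qed

lemma real_rooted_smult_iff:
  "c \<noteq> 0 \<Longrightarrow> real_rooted (smult c p) \<longleftrightarrow> real_rooted p"
  by (simp add: real_rooted_def)

definition binom_poly :: "nat \<Rightarrow> (nat \<Rightarrow> real) \<Rightarrow> complex poly" where
  "binom_poly d a = (\<Sum>i\<le>d. monom (complex_of_real (real (d choose i) * a i)) i)"

lemma coeff_binom_poly:
  "coeff (binom_poly d a) i = complex_of_real (real (d choose i) * a i)"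
  by (simp add: binom_poly_def coeff_sum)

lemma poly_binom_poly:
  "poly (binom_poly d a) z = (\<Sum>i\<le>d. complex_of_real (real (d choose i) * a i) * z ^ i)"
  by (simp add: binom_poly_def poly_sum poly_monom)

lemma binom_poly_cong:
  "(\<And>i. i \<le> d \<Longrightarrow> a i = b i) \<Longrightarrow> binom_poly d a = binom_poly d b"
  by (simp add: binom_poly_def)

lemma binom_poly_eq_0_iff:
  "binom_poly d a = 0 \<longleftrightarrow> (\<forall>i\<le>d. a i = 0)"
  by (auto simp: poly_eq_iff coeff_binom_poly) (meson not_less)+

lemma pderiv_binom_poly:
  "pderiv (binom_poly (Suc d) a) = smult (of_nat (Suc d)) (binom_poly d (\<lambda>i. a (Suc i)))"
proof (rule poly_eqI)
  fix i
  have binom: "(of_nat (Suc i) :: complex) * of_nat (Suc d choose Suc i)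
      = of_nat (Suc d) * of_nat (d choose i)"
    by (metis Suc_times_binomial_eq mult.commute of_nat_mult)
  then show "coeff (pderiv (binom_poly (Suc d) a)) i
      = coeff (smult (of_nat (Suc d)) (binom_poly d (\<lambda>i. a (Suc i)))) i"
    unfolding coeff_pderiv coeff_smult coeff_binom_poly
    by (simp add: mult.assoc flip: binom del: of_nat_Suc)
qed

lemma real_rooted_binom_poly_drop:
  "real_rooted (binom_poly (d + m) a) \<Longrightarrow> real_rooted (binom_poly d (\<lambda>i. a (i + m)))"
proof (induction m arbitrary: a)
  case 0
  then show ?case by simp
next
  case (Suc m)
  then have "real_rooted (binom_poly (d + m) (\<lambda>i. a (Suc i)))"
    using real_rooted_pderiv[of "binom_poly (Suc (d + m)) a"]
    by (simp add: pderiv_binom_poly real_rooted_smult_iff del: of_nat_Suc)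
  from Suc.IH[OF this] show ?case by simp
qed

lemma poly_binom_poly_reverse:
  assumes "z \<noteq> 0"
  shows "poly (binom_poly d (\<lambda>i. a (d - i))) z = z ^ d * poly (binom_poly d a) (inverse z)"
proof -
  have "poly (binom_poly d (\<lambda>i. a (d - i))) z
      = (\<Sum>i\<le>d. complex_of_real (real (d choose (d - i)) * a (d - i)) * z ^ (d - (d - i)))"
    unfolding poly_binom_poly
    by (intro sum.cong) (simp_all flip: binomial_symmetric)
  also have "\<dots> = (\<Sum>i\<le>d. complex_of_real (real (d choose i) * a i) * z ^ (d - i))"
    by (rule sum.reindex_bij_witness[where i="\<lambda>i. d - i" and j="\<lambda>i. d - i"]) auto
  also have "\<dots> = z ^ d * poly (binom_poly d a) (inverse z)"
    unfolding poly_binom_poly sum_distrib_left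
    by (intro sum.cong) (simp_all add: assms power_diff field_simps)
  finally show ?thesis .
qed

lemma real_rooted_binom_poly_reverse:
  assumes "real_rooted (binom_poly d a)"
  shows "real_rooted (binom_poly d (\<lambda>i. a (d - i)))"
proof (cases "binom_poly d a = 0")
  case True
  then show ?thesis by (simp add: binom_poly_eq_0_iff real_rooted_def)
next
  case False
  have "Im z = 0" if "poly (binom_poly d (\<lambda>i. a (d - i))) z = 0" for z
  proof (cases "z = 0")
    case False
    then have "poly (binom_poly d a) (inverse z) = 0"
      using that by (simp add: poly_binom_poly_reverse)
    then have "inverse z \<in> \<real>"
      using assms \<open>binom_poly d a \<noteq> 0\<close> by (metis real_rooted_def complex_is_Real_iff)
    then show ?thesis
      by (metis Reals_inverse complex_is_Real_iff inverse_inverse_eq)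
  qed simp
  then show ?thesis by (simp add: real_rooted_def)
qed

lemma real_rooted_binom_poly_2:
  assumes "real_rooted (binom_poly 2 a)"
  shows "a 0 * a 2 \<le> a 1 ^ 2"
proof (rule ccontr)
  assume "\<not> ?thesis"
  then have disc: "a 1 ^ 2 < a 0 * a 2" by simp
  then have "a 2 \<noteq> 0" by (metis mult_zero_right not_less zero_le_power2)
  then have nonzero: "binom_poly 2 a \<noteq> 0" by (auto simp: binom_poly_eq_0_iff)
  define \<delta> where "\<delta> = sqrt (a 0 * a 2 - a 1 ^ 2)"
  have "\<delta> > 0" and a0: "a 0 = (\<delta> ^ 2 + a 1 ^ 2) / a 2"
    using disc \<open>a 2 \<noteq> 0\<close> by (simp_all add: \<delta>_def field_simps)
  define z where "z = Complex (- a 1 / a 2) (\<delta> / a 2)"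
  have "poly (binom_poly 2 a) z = of_real (a 2) * z ^ 2 + 2 * of_real (a 1) * z + of_real (a 0)"
    by (simp add: poly_binom_poly numeral_2_eq_2)
  also have "\<dots> = 0"
    using \<open>a 2 \<noteq> 0\<close> by (simp add: z_def complex_eq_iff a0 power2_eq_square field_simps)
  finally have "Im z = 0"
    using assms nonzero by (simp add: real_rooted_def)
  then show False
    using \<open>\<delta> > 0\<close> \<open>a 2 \<noteq> 0\<close> by (simp add: z_def)
qed

theorem real_rooted_binom_poly_Newton:
  assumes "real_rooted (binom_poly d a)" and "1 \<le> k" and "k < d"
  shows "a (k - 1) * a (k + 1) \<le> a k ^ 2"
proof -
  define m where "m = d - k - 1"
  have d: "d = 2 + m + (k - 1)"
    using assms by (simp add: m_def)
  have "real_rooted (binom_poly (2 + m) (\<lambda>i. a (i + (k - 1))))"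
    using real_rooted_binom_poly_drop assms(1) d by metis
  then have "real_rooted (binom_poly (2 + m) (\<lambda>i. a (2 + m - i + (k - 1))))"
    by (rule real_rooted_binom_poly_reverse)
  also have "binom_poly (2 + m) (\<lambda>i. a (2 + m - i + (k - 1)))
      = binom_poly (2 + m) (\<lambda>i. a (d - i))"
    using d by (intro binom_poly_cong) simp
  finally have "real_rooted (binom_poly 2 (\<lambda>i. a (d - (i + m))))"
    by (rule real_rooted_binom_poly_drop)
  from real_rooted_binom_poly_2[OF this] show ?thesis
    using d assms(2) by (simp add: numeral_2_eq_2 mult.commute Suc_diff_le)
qed

definition esym_mean :: "nat \<Rightarrow> nat \<Rightarrow> (nat \<Rightarrow> real) \<Rightarrow> real" where
  "esym_mean n m \<kappa> = esym n m \<kappa> / real (n choose m)"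

lemma prod_linear_factors_eq_binom_poly:
  "(\<Prod>i<n. [:complex_of_real (\<kappa> i), 1:]) = binom_poly n (\<lambda>i. esym_mean n (n - i) \<kappa>)"
proof (rule poly_eqI)
  fix i
  show "coeff (\<Prod>i<n. [:complex_of_real (\<kappa> i), 1:]) i
      = coeff (binom_poly n (\<lambda>i. esym_mean n (n - i) \<kappa>)) i"
  proof (cases "i \<le> n")
    case True
    then have "n choose (n - i) = n choose i" "n choose i > 0"
      by (simp_all flip: binomial_symmetric)
    then show ?thesis
      using True by (simp add: coeff_prod_linear_factors coeff_binom_poly esym_mean_def)
  qed (simp add: coeff_prod_linear_factors coeff_binom_poly)
qed

lemma real_rooted_prod_linear_factors:
  "real_rooted (\<Prod>i<(n::nat). [:complex_of_real (\<kappa> i), 1:])"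
proof -
  have "Im z = 0" if "poly (\<Prod>i<n. [:complex_of_real (\<kappa> i), 1:]) z = 0" for z
  proof -
    have "\<exists>i\<in>{..<n}. complex_of_real (\<kappa> i) + z = 0"
      using that by (simp add: poly_prod prod_zero_iff)
    then obtain i where "complex_of_real (\<kappa> i) + z = 0"
      by blast
    then have "z = - complex_of_real (\<kappa> i)"
      by (simp add: eq_neg_iff_add_eq_0 add.commute)
    then show ?thesis by simp
  qed
  then show ?thesis by (simp add: real_rooted_def)
qed

theorem esym_mean_Newton:
  assumes "1 \<le> k" and "k < n"
  shows "esym_mean n (k - 1) \<kappa> * esym_mean n (k + 1) \<kappa> \<le> esym_mean n k \<kappa> ^ 2"
proof -
  have "real_rooted (binom_poly n (\<lambda>i. esym_mean n (n - i) \<kappa>))"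
    using real_rooted_prod_linear_factors by (simp flip: prod_linear_factors_eq_binom_poly)
  from real_rooted_binom_poly_Newton[OF this, of "n - k"] assms show ?thesis
    by (simp add: mult.commute Suc_diff_Suc diff_diff_right)
qed

lemma log_concave_ratio_le:
  fixes a :: "nat \<Rightarrow> real"
  assumes pos: "\<And>j. j \<le> k \<Longrightarrow> 0 < a j"
    and log_concave: "\<And>j. 1 \<le> j \<Longrightarrow> j < k \<Longrightarrow> a (j - 1) * a (j + 1) \<le> a j ^ 2"
    and "j < k"
  shows "a (Suc j) * a 0 \<le> a 1 * a j"
  using \<open>j < k\<close>
proof (induction j)
  case 0
  then show ?case by simp
next
  case (Suc j)
  have "a j * a (Suc (Suc j)) * a 0 \<le> a (Suc j) * a (Suc j) * a 0"
    using log_concave[of "Suc j"] pos[of 0] Suc.prems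
    by (intro mult_right_mono) (simp_all add: power2_eq_square)
  also have "\<dots> \<le> a (Suc j) * (a 1 * a j)"
    using Suc pos[of "Suc j"] by (simp add: mult.assoc)
  finally show ?case
    using pos[of j] Suc.prems by (simp add: algebra_simps)
qed

lemma log_concave_geometric_bound:
  fixes a :: "nat \<Rightarrow> real"
  assumes pos: "\<And>j. j \<le> k \<Longrightarrow> 0 < a j"
    and log_concave: "\<And>j. 1 \<le> j \<Longrightarrow> j < k \<Longrightarrow> a (j - 1) * a (j + 1) \<le> a j ^ 2"
    and "a 1 \<le> c * a 0" and "s \<le> k"
  shows "a k \<le> c ^ s * a (k - s)"
  using \<open>s \<le> k\<close>
proof (induction s)
  case 0
  then show ?case by simp
next
  case (Suc s)
  have step: "a (Suc j) \<le> c * a j" if "j < k" for j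
  proof -
    have "a (Suc j) * a 0 \<le> a 1 * a j"
      using log_concave_ratio_le[OF pos log_concave that] .
    also have "\<dots> \<le> c * a 0 * a j"
      using assms(3) pos[of j] that by (simp add: mult_right_mono)
    finally show ?thesis
      using pos[of 0] by (simp add: algebra_simps)
  qed
  have "0 < c * a 0"
    using step[of 0] pos[of 1] Suc.prems by simp
  then have "0 \<le> c ^ s"
    using pos[of 0] by (simp add: zero_less_mult_iff)
  moreover have "a (k - s) \<le> c * a (k - Suc s)"
    using step[of "k - Suc s"] Suc.prems by (simp add: Suc_diff_Suc)
  ultimately show ?case
    using Suc by (metis mult_left_mono mult.assoc order_trans power_Suc2 Suc_leD)
qed

theorem lemma2p3:
  fixes n k s :: nat and \<kappa> :: "nat \<Rightarrow> real"
  assumes "1 \<le> k" and "s \<le> k" and "k \<le> n"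
    and "\<kappa> \<in> garding_cone n k"
    and "\<And>i j. i \<le> j \<Longrightarrow> j < n \<Longrightarrow> \<kappa> j \<le> \<kappa> i"
  shows "\<kappa> 0 ^ s * esym n (k - s) \<kappa> / esym n k \<kappa>
           \<ge> real (n choose (k - s)) / real (n choose k)"
proof -
  have esym_pos: "0 < esym n j \<kappa>" if "j \<le> k" for j
    using assms(4) that by (cases "j = 0") (auto simp: garding_cone_def)
  have mean_pos: "0 < esym_mean n j \<kappa>" if "j \<le> k" for j
    using esym_pos[OF that] that assms(3) by (simp add: esym_mean_def)
  have "esym n 1 \<kappa> \<le> real n * \<kappa> 0"
    unfolding esym_1 using sum_mono[of "{..<n}" \<kappa> "\<lambda>_. \<kappa> 0"] assms(5) by simp
  then have "esym_mean n 1 \<kappa> \<le> \<kappa> 0 * esym_mean n 0 \<kappa>"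
    using assms(1,3) by (simp add: esym_mean_def divide_le_eq mult.commute)
  then have "esym_mean n k \<kappa> \<le> \<kappa> 0 ^ s * esym_mean n (k - s) \<kappa>"
    using mean_pos esym_mean_Newton assms(2,3) by (intro log_concave_geometric_bound) auto
  then show ?thesis
    using esym_pos[of k] esym_pos[of "k - s"] assms(2,3)
    by (simp add: esym_mean_def field_simps)
qed

end
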